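(* Let $\lambda\in(\frac16,\frac56)$. For all $n\ge0$, $$\sup_{z\in[0,1]}|F^\lambda_{n+1}(z)-F^\lambda_n(z)|\le\begin{cases}\lambda\left(\frac13+2\lambda\right)^n&\text{if }\lambda\in(\frac16,\frac13),\\ \lambda\left(\frac16+\lambda\right)^n&\text{if }\lambda\in[\frac13,\frac56).\end{cases}$$
   Context: Fix $\lambda>0$. $F^\lambda_0\equiv0$ on $[0,1]$ (one interval of generation $0$). Given $F^\lambda_n$ with its $4^n$ closed intervals of generation $n$ (covering $[0,1]$, disjoint interiors, $F^\lambda_n$ affine on each), on each interval $[a,b]$ of generation $n$, with $\ell=b-a$ and $m$ the slope of $F^\lambda_n$ there, $F^\lambda_{n+1}$ coincides with $F^\lambda_n$ at $a,a+\ell/3,a+2\ell/3,b$, equals $F^\lambda_n(a+\ell/2)+\lambda\ell\sqrt{1+m^2}$ at $a+\ell/2$, and is affine on each of $[a,a+\ell/3],[a+\ell/3,a+\ell/2],[a+\ell/2,a+2\ell/3],[a+2\ell/3,b]$ (generation $n+1$). *)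

theory Defs
  imports Complex_Main
begin

text \<open>A piecewise affine function on [0,1] is represented by its list of nodes
  (x_0,y_0),...,(x_k,y_k) with 0 = x_0 < ... < x_k = 1; consecutive nodes bound
  the intervals of the current generation.\<close>

text \<open>Refinement of one interval [a,b] with end values fa, fb: returns the nodes
  a, a+l/3, a+l/2, a+2l/3 (the right endpoint b is produced by the next segment).\<close>
definition refine_seg :: "real \<Rightarrow> real \<times> real \<Rightarrow> real \<times> real \<Rightarrow> (real \<times> real) list" where
  "refine_seg lam p q =
    (let a = fst p; fa = snd p; b = fst q; fb = snd q; l = b - a; m = (fb - fa) / l
     in [(a, fa),
         (a + l/3, fa + m * (l/3)),
         (a + l/2, fa + m * (l/2) + lam * l * sqrt (1 + m^2)),
         (a + 2*l/3, fa + m * (2*l/3))])"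

fun refine :: "real \<Rightarrow> (real \<times> real) list \<Rightarrow> (real \<times> real) list" where
  "refine lam (p # q # rest) = refine_seg lam p q @ refine lam (q # rest)"
| "refine lam [p] = [p]"
| "refine lam [] = []"

definition nodes :: "real \<Rightarrow> nat \<Rightarrow> (real \<times> real) list" where
  "nodes lam n = (refine lam ^^ n) [(0, 0), (1, 0)]"

fun interp :: "(real \<times> real) list \<Rightarrow> real \<Rightarrow> real" where
  "interp ((a, fa) # (b, fb) # rest) x =
     (if x \<le> b then fa + (fb - fa) / (b - a) * (x - a) else interp ((b, fb) # rest) x)"
| "interp [(a, fa)] x = fa"
| "interp [] x = 0"

definition F :: "real \<Rightarrow> nat \<Rightarrow> real \<Rightarrow> real" where
  "F lam n = interp (nodes lam n)"

end

theory Submission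
  imports Defs "HOL-Analysis.Product_Vector"
begin

(* Refining a generation-n interval [a,b] leaves F unchanged outside its middle third and adds
   there a tent of height lam * l * sqrt (1 + m^2), i.e. lam times the length s of the graph
   segment over [a,b]. The four new graph segments have length s/3 or, by the triangle
   inequality through the old midpoint, at most s/6 + lam * s. Hence for lam >= 1/6 all graph
   segments of generation n have length at most (1/6 + lam)^n, and F_(n+1) - F_n is bounded by
   lam * (1/6 + lam)^n. As 1/6 + lam <= 1/3 + 2 lam, this uniform bound gives both cases. *)

lemma interp_Cons_Cons:
  "interp (p # q # rest) z =
    (if z \<le> fst q then snd p + (snd q - snd p) / (fst q - fst p) * (z - fst p)
     else interp (q # rest) z)"
  by (cases p; cases q) simp

lemma refine_seg_eq:
  assumes "fst p < fst q"
  shows "refine_seg lam p q =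
    [p, p + (1/3) *\<^sub>R (q - p), p + (1/2) *\<^sub>R (q - p) + (0, lam * dist p q), p + (2/3) *\<^sub>R (q - p)]"
proof -
  obtain a fa b fb where pq: "p = (a, fa)" "q = (b, fb)" by (cases p, cases q)
  define l d where "l = b - a" and "d = fb - fa"
  have l: "l > 0" using assms pq l_def by simp
  have "l * sqrt (1 + (d / l)^2) = sqrt (l^2 * (1 + (d / l)^2))"
    using l by (simp add: real_sqrt_mult)
  also have "\<dots> = dist p q"
    using l by (simp add: pq l_def d_def dist_Pair_Pair dist_real_def power2_commute field_simps)
  finally have "lam * l * sqrt (1 + (d / l)^2) = lam * dist p q"
    by (simp add: mult.assoc)
  then show ?thesis using l
    by (simp add: pq refine_seg_def Let_def l_def d_def)
qed

lemma refine_keeps_first_node: "\<exists>ts. refine lam (q # rest) = q # ts"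
  by (cases rest) (auto simp: refine_seg_def Let_def)

lemma refine_Cons_Cons:
  assumes "fst p < fst q"
  shows "\<exists>ts. refine lam (p # q # rest) =
    [p, p + (1/3) *\<^sub>R (q - p), p + (1/2) *\<^sub>R (q - p) + (0, lam * dist p q),
     p + (2/3) *\<^sub>R (q - p), q] @ ts \<and> refine lam (q # rest) = q # ts"
  using refine_keeps_first_node[of lam q rest] by (auto simp: refine_seg_eq[OF assms])

lemma interp_refine_Cons_Cons_within:
  assumes "fst p < fst q" and "z \<le> fst q"
  shows "\<exists>t\<in>{0..1}.
    interp (refine lam (p # q # rest)) z = interp (p # q # rest) z + t * (lam * dist p q)"
proof -
  obtain a fa b fb where pq: "p = (a, fa)" "q = (b, fb)" by (cases p, cases q)
  obtain ts where ts: "refine lam (p # q # rest) =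
    [p, p + (1/3) *\<^sub>R (q - p), p + (1/2) *\<^sub>R (q - p) + (0, lam * dist p q),
     p + (2/3) *\<^sub>R (q - p), q] @ ts"
    using refine_Cons_Cons[OF assms(1)] by blast
  define l d h where "l = b - a" and "d = fb - fa" and "h = lam * dist p q"
  have l: "l > 0" using assms pq l_def by simp
  have b: "b = a + l" "fb = fa + d" using l_def d_def by simp_all
  have refined: "interp (refine lam (p # q # rest)) z =
      (if z \<le> a + l/3 then fa + d/l * (z - a)
       else if z \<le> a + l/2 then fa + d/l * (z - a) + h * (6 * (z - a - l/3) / l)
       else if z \<le> a + 2*l/3 then fa + d/l * (z - a) + h * (6 * (a + 2*l/3 - z) / l)
       else fa + d/l * (z - a))"
    using assms(2) l unfolding ts h_def unfolding pq b by (simp add: interp_Cons_Cons field_simps)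
  have orig: "interp (p # q # rest) z = fa + d/l * (z - a)"
    using assms(2) pq l_def d_def by (simp add: interp_Cons_Cons)
  consider "z \<le> a + l/3" | "a + l/3 < z" "z \<le> a + l/2"
    | "a + l/2 < z" "z \<le> a + 2*l/3" | "a + 2*l/3 < z"
    by linarith
  then show ?thesis
  proof cases
    case 2
    then show ?thesis using l unfolding refined orig h_def[symmetric]
      by (intro bexI[of _ "6 * (z - a - l/3) / l"]) (auto simp: field_simps)
  next
    case 3
    then show ?thesis using l unfolding refined orig h_def[symmetric]
      by (intro bexI[of _ "6 * (a + 2*l/3 - z) / l"]) (auto simp: field_simps)
  qed (unfold refined orig, auto intro: bexI[of _ 0])
qed

lemma interp_refine_Cons_Cons_beyond:
  assumes "fst p < fst q" and "fst q < z"
  shows "interp (refine lam (p # q # rest)) z = interp (refine lam (q # rest)) z"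
proof -
  obtain ts where "refine lam (p # q # rest) =
    [p, p + (1/3) *\<^sub>R (q - p), p + (1/2) *\<^sub>R (q - p) + (0, lam * dist p q),
     p + (2/3) *\<^sub>R (q - p), q] @ ts" and "refine lam (q # rest) = q # ts"
    using refine_Cons_Cons[OF assms(1)] by blast
  then show ?thesis using assms by (simp add: interp_Cons_Cons algebra_simps)
qed

definition graph_segments_le :: "real \<Rightarrow> (real \<times> real) list \<Rightarrow> bool" where
  "graph_segments_le M ns \<longleftrightarrow> successively (\<lambda>u v. fst u < fst v \<and> dist u v \<le> M) ns"

lemma graph_segments_le_refine_seg:
  assumes "fst p < fst q" and "1/6 \<le> lam"
  shows "graph_segments_le ((1/6 + lam) * dist p q) (refine_seg lam p q @ [q])"
proof -
  define s h where "s = dist p q" and "h = lam * dist p q"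
  define node :: "real \<Rightarrow> real \<times> real" where "node t = p + t *\<^sub>R (q - p)" for t
  have node_dist: "dist (node t) (node t') = \<bar>t' - t\<bar> * s" for t t'
    by (simp add: node_def s_def dist_norm[of q p, symmetric] dist_commute abs_minus_commute)
  have bump: "dist (node (1/2)) (node (1/2) + (0, h)) = \<bar>h\<bar>"
    by (simp add: dist_norm)
  have h: "0 \<le> h" "h = lam * s" using assms(2) by (simp_all add: h_def s_def)
  have "dist (node (1/3)) (node (1/2) + (0, h)) \<le> s/6 + h"
    using dist_triangle[of "node (1/3)" "node (1/2) + (0, h)" "node (1/2)"]
      node_dist[of "1/3" "1/2"] bump h by simp
  moreover have "dist (node (1/2) + (0, h)) (node (2/3)) \<le> s/6 + h"
    using dist_triangle[of "node (1/2) + (0, h)" "node (2/3)" "node (1/2)"]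
      node_dist[of "1/2" "2/3"] bump h by (simp add: dist_commute)
  moreover have "s/3 \<le> (1/6 + lam) * s"
    using mult_right_mono[of "1/3" "1/6 + lam" s] assms(2) by (simp add: s_def)
  moreover have "s/6 + h = (1/6 + lam) * s"
    using h by (simp add: algebra_simps)
  moreover have "fst (node t) < fst (node t')" if "t < t'" for t t'
    using assms(1) that by (simp add: node_def mult_strict_right_mono)
  moreover have shape: "refine_seg lam p q @ [q] =
      [node 0, node (1/3), node (1/2) + (0, h), node (2/3), node 1]"
    by (simp add: refine_seg_eq[OF assms(1)] node_def h_def)
  ultimately show ?thesis
    using node_dist[of 0 "1/3"] node_dist[of "2/3" 1]
    unfolding graph_segments_le_def shape s_def[symmetric] by simp
qed

lemma graph_segments_le_mono:
  "graph_segments_le M ns \<Longrightarrow> M \<le> M' \<Longrightarrow> graph_segments_le M' ns"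
  unfolding graph_segments_le_def by (erule successively_mono) auto

lemma graph_segments_le_refine:
  assumes "graph_segments_le M ns" and "1/6 \<le> lam"
  shows "graph_segments_le ((1/6 + lam) * M) (refine lam ns)"
  using assms
proof (induction lam ns rule: refine.induct)
  case (1 lam p q rest)
  have pq: "fst p < fst q" "dist p q \<le> M" and tail: "graph_segments_le M (q # rest)"
    using "1.prems"(1) by (simp_all add: graph_segments_le_def)
  obtain ts where ts: "refine lam (q # rest) = q # ts"
    using refine_keeps_first_node by blast
  have "graph_segments_le ((1/6 + lam) * M) (refine_seg lam p q @ [q])"
    using graph_segments_le_refine_seg[OF pq(1) "1.prems"(2)] pq(2) "1.prems"(2)
    by (elim graph_segments_le_mono) (simp add: mult_left_mono)
  moreover have "graph_segments_le ((1/6 + lam) * M) (q # ts)"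
    using "1.IH"[OF tail "1.prems"(2)] ts by simp
  ultimately show ?case
    using ts by (simp add: graph_segments_le_def successively_append_iff successively_Cons)
qed (simp_all add: graph_segments_le_def)

lemma interp_refine_dist:
  assumes "graph_segments_le M ns" and "0 \<le> lam" and "0 \<le> M"
  shows "\<bar>interp (refine lam ns) z - interp ns z\<bar> \<le> lam * M"
  using assms
proof (induction lam ns rule: refine.induct)
  case (1 lam p q rest)
  have pq: "fst p < fst q" "dist p q \<le> M" and tail: "graph_segments_le M (q # rest)"
    using "1.prems"(1) by (simp_all add: graph_segments_le_def)
  show ?case
  proof (cases "z \<le> fst q")
    case True
    then obtain t where "t \<in> {0..1}"
      "interp (refine lam (p # q # rest)) z = interp (p # q # rest) z + t * (lam * dist p q)"
      using interp_refine_Cons_Cons_within[OF pq(1)] by blast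
    moreover have "t * (lam * dist p q) \<le> 1 * (lam * M)"
      using \<open>t \<in> {0..1}\<close> pq(2) "1.prems"(2) by (intro mult_mono mult_left_mono) auto
    ultimately show ?thesis using "1.prems"(2) by simp
  next
    case False
    then show ?thesis
      using "1.IH"[OF tail "1.prems"(2,3)] interp_refine_Cons_Cons_beyond[OF pq(1)]
      by (simp add: interp_Cons_Cons)
  qed
qed simp_all

lemma graph_segments_le_nodes:
  "1/6 \<le> lam \<Longrightarrow> graph_segments_le ((1/6 + lam) ^ n) (nodes lam n)"
proof (induction n)
  case 0
  then show ?case by (simp add: nodes_def graph_segments_le_def dist_Pair_Pair)
next
  case (Suc n)
  then show ?case
    using graph_segments_le_refine[of "(1/6 + lam) ^ n" "nodes lam n" lam] by (simp add: nodes_def)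
qed

theorem lemma3p6:
  fixes lam :: real and n :: nat
  assumes "1/6 < lam" and "lam < 5/6"
  shows "(SUP z\<in>{0..1}. \<bar>F lam (Suc n) z - F lam n z\<bar>)
           \<le> (if lam < 1/3 then lam * (1/3 + 2*lam) ^ n else lam * (1/6 + lam) ^ n)"
proof -
  have "\<bar>F lam (Suc n) z - F lam n z\<bar> \<le> lam * (1/6 + lam) ^ n" for z
    using interp_refine_dist[OF graph_segments_le_nodes] assms(1)
    by (simp add: F_def nodes_def)
  then have "(SUP z\<in>{0..1}. \<bar>F lam (Suc n) z - F lam n z\<bar>) \<le> lam * (1/6 + lam) ^ n"
    by (intro cSUP_least) auto
  moreover have "lam * (1/6 + lam) ^ n \<le> lam * (1/3 + 2*lam) ^ n"
    using assms(1) by (intro mult_left_mono power_mono) auto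
  ultimately show ?thesis by auto
qed

end
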